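(* Assume (A1)–(A4). Run the Algorithm with $x_1\in R\mathbb{B}$, $\eta=\frac{2R}{G_f\sqrt{T}}$ and $\rho=0$. Then $\mathrm{Reg}_T\le2RG_f\sqrt{T}$, and for all $t\in[T]$, $$g(x_t)\le2RG_g\exp\Big(-\frac{\sigma^2(t-1)}{2G_g^2}\Big)+\frac{2RG_g}{\xi\sqrt{T}}.$$
   Context: Let $d,T$ be positive integers and $[T]=\{1,\dots,T\}$. Write $\|\cdot\|$ for the Euclidean norm and $\mathbb{B}=\{x\in\mathbb{R}^d:\|x\|\le1\}$. For a closed convex set $\mathcal{Y}$, $\Pi_{\mathcal{Y}}$ is the Euclidean projection onto $\mathcal{Y}$. For $a\in\mathbb{R}$, $[a]_+=\max(a,0)$. Let $g:\mathbb{R}^d\to\mathbb{R}$ be convex with subdifferential $\partial g(x)$, and set $\mathcal{X}=\{x:g(x)\le0\}$. Assumptions: (A1) there is $R>0$ with $\mathcal{X}\subseteq R\mathbb{B}$; (A2) $f_1,\dots,f_T:\mathbb{R}^d\to\mathbb{R}$ are convex and differentiable, and there is $G_f>0$ with $\|\nabla f_t(x)\|\le G_f$ for all $x\in R\mathbb{B}$ and all $t\in[T]$; (A3) there is $G_g>0$ with $\|s\|\le G_g$ for all $s\in\partial g(x)$ and all $x\in R\mathbb{B}$; (A4) there are $\sigma,\epsilon>0$ such that $\mathcal{X}'=\{x:g(x)=-\epsilon\}$ is nonempty and $\|s\|\ge\sigma$ for all $s\in\partial g(x)$ and all $x\in\mathcal{X}'$. Algorithm (OGD with Polyak feasibility steps).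 Inputs are $x_1\in\mathbb{R}^d$, $\eta>0$ and $\rho\ge0$. For $t=1,\dots,T$: - play $x_t$ and then receive $f_t$; the functions may be chosen adversarially and may depend on past actions; - query $g_t=g(x_t)$ and some $s_t\in\partial g(x_t)$; - set $y_t=x_t-\eta\nabla f_t(x_t)$; - if $s_t\ne0$, set $x_{t+1}=\Pi_{R\mathbb{B}}\big(y_t-\frac{[g_t+s_t^\top(y_t-x_t)+\rho]_+}{\|s_t\|^2}s_t\big)$; if $s_t=0$, set $x_{t+1}=\Pi_{R\mathbb{B}}(y_t)$. Regret is $\mathrm{Reg}_T=\sum_{t=1}^Tf_t(x_t)-\min_{x\in\mathcal{X}}\sum_{t=1}^Tf_t(x)$. Also $\gamma=1-\sigma^2/G_g^2$ and $\xi=1-\sqrt{\gamma}$. *)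

theory Defs
  imports "HOL-Analysis.Analysis"
begin

definition subdifferential :: "('a::real_inner \<Rightarrow> real) \<Rightarrow> 'a \<Rightarrow> 'a set" where
  "subdifferential g x = {s. \<forall>y. g x + s \<bullet> (y - x) \<le> g y}"

definition pos_part :: "real \<Rightarrow> real" where
  "pos_part a = max a 0"

text \<open>One step of OGD with Polyak feasibility steps. Arguments: constraint g,
  step size eta, margin rho, radius R, current iterate x, gradient of f_t at x, subgradient s of g at x.\<close>
definition ogd_polyak_step ::
  "('a::euclidean_space \<Rightarrow> real) \<Rightarrow> real \<Rightarrow> real \<Rightarrow> real \<Rightarrow> 'a \<Rightarrow> 'a \<Rightarrow> 'a \<Rightarrow> 'a" where
  "ogd_polyak_step g eta rho R x gf s =
     (let y = x - eta *\<^sub>R gf in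
      if s \<noteq> 0 then
        closest_point (cball 0 R)
          (y - (pos_part (g x + s \<bullet> (y - x) + rho) / (norm s)\<^sup>2) *\<^sub>R s)
      else closest_point (cball 0 R) y)"

definition regret ::
  "(nat \<Rightarrow> 'a \<Rightarrow> real) \<Rightarrow> ('a \<Rightarrow> real) \<Rightarrow> (nat \<Rightarrow> 'a) \<Rightarrow> nat \<Rightarrow> real" where
  "regret f g x T = (\<Sum>t=1..T. f t (x t)) - (INF u\<in>{v. g v \<le> 0}. \<Sum>t=1..T. f t u)"

end

theory Submission
  imports Defs
begin

(* The Polyak step is the Euclidean projection onto the half-space
   {z. g x + s \<bullet> (z - x) \<le> 0}, which contains the feasible set X by the subgradient
   inequality; together with nonexpansiveness of the projection onto cball 0 R, every iterate
   is no farther from any feasible comparator than the plain gradient step, and the usual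
   telescoping argument of online gradient descent bounds the regret.
   For the constraint, (A4) gives the error bound sigma * dist(x, X) \<le> g x: a subgradient
   normal to X at the projection p of x is compared, by monotonicity, with a parallel
   subgradient at a point of the level set {g = -epsilon}, whose norm is at least sigma.
   Hence the Polyak step contracts dist(x, X) by sqrt (1 - sigma^2 / G_g^2), the gradient
   step perturbs it by at most eta * G_f, and unrolling this recursion together with
   g x \<le> G_g * dist(x, X) yields the bound. *)

lemma convex_on_gradient_inequality:
  fixes f :: "'a::real_inner \<Rightarrow> real"
  assumes f: "convex_on UNIV f" and der: "(f has_derivative (\<lambda>h. G \<bullet> h)) (at v)"
  shows "f v + G \<bullet> (u - v) \<le> f u"
proof -
  define \<phi> where "\<phi> = (\<lambda>\<tau>::real. f (v + \<tau> *\<^sub>R (u - v)))"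
  have "convex_on UNIV \<phi>"
  proof (rule convex_onI)
    fix t a b :: real assume "0 < t" "t < 1"
    moreover have "v + ((1 - t) *\<^sub>R a + t *\<^sub>R b) *\<^sub>R (u - v)
                 = (1 - t) *\<^sub>R (v + a *\<^sub>R (u - v)) + t *\<^sub>R (v + b *\<^sub>R (u - v))"
      by (simp add: algebra_simps)
    ultimately show "\<phi> ((1 - t) *\<^sub>R a + t *\<^sub>R b) \<le> (1 - t) * \<phi> a + t * \<phi> b"
      unfolding \<phi>_def using convex_onD[OF f, of t] by simp
  qed simp
  moreover have "(\<phi> has_field_derivative (G \<bullet> (u - v))) (at 0)"
  proof -
    have "((\<lambda>\<tau>::real. v + \<tau> *\<^sub>R (u - v)) has_derivative (\<lambda>\<tau>. \<tau> *\<^sub>R (u - v))) (at 0)"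
      by (auto intro!: derivative_eq_intros)
    moreover have "(f has_derivative (\<lambda>h. G \<bullet> h)) (at (v + 0 *\<^sub>R (u - v)))" using der by simp
    ultimately have "(\<phi> has_derivative (\<lambda>\<tau>. G \<bullet> (\<tau> *\<^sub>R (u - v)))) (at 0)"
      unfolding \<phi>_def by (rule has_derivative_compose)
    moreover have "(\<lambda>\<tau>. G \<bullet> (\<tau> *\<^sub>R (u - v))) = (*) (G \<bullet> (u - v))"
      by (simp add: fun_eq_iff mult.commute)
    ultimately show ?thesis by (simp add: has_field_derivative_def)
  qed
  ultimately have "G \<bullet> (u - v) * (1 - 0) \<le> \<phi> 1 - \<phi> 0"
    using convex_on_imp_above_tangent[of UNIV \<phi> 0 1] by simp
  then show ?thesis unfolding \<phi>_def by simp
qed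

lemma closed_sublevel:
  fixes g :: "'a::euclidean_space \<Rightarrow> real"
  assumes "convex_on UNIV g"
  shows "closed {v. g v \<le> c}"
  using closed_Collect_le[OF convex_on_continuous[OF open_UNIV assms] continuous_on_const] .

lemma convex_sublevel:
  assumes g: "convex_on UNIV g"
  shows "convex {v. g v \<le> c}"
proof (rule convexI)
  fix x y and a b :: real
  assume "x \<in> {v. g v \<le> c}" "y \<in> {v. g v \<le> c}" "0 \<le> a" "0 \<le> b" "a + b = 1"
  moreover have "g (a *\<^sub>R x + b *\<^sub>R y) \<le> a * g x + b * g y"
    using convex_onD[OF g, of b x y] \<open>0 \<le> a\<close> \<open>0 \<le> b\<close> \<open>a + b = 1\<close>
    by (simp add: eq_diff_eq[symmetric])
  ultimately show "a *\<^sub>R x + b *\<^sub>R y \<in> {v. g v \<le> c}"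
    using convex_bound_le[of "g x" c "g y" a b] by simp
qed

lemma le_on_normal_halfspace_of_sublevel:
  fixes g :: "'a::real_inner \<Rightarrow> real"
  assumes g: "continuous_on UNIV g" and "u \<noteq> 0"
    and max: "\<And>z. g z \<le> c \<Longrightarrow> u \<bullet> z \<le> u \<bullet> q"
    and y: "u \<bullet> q \<le> u \<bullet> y"
  shows "c \<le> g y"
proof (rule ccontr)
  assume "\<not> c \<le> g y"
  moreover have "open {v. g v < c}"
    using open_Collect_less[OF g continuous_on_const] .
  ultimately obtain e where "e > 0" and e: "ball y e \<subseteq> {v. g v < c}"
    by (metis mem_Collect_eq not_le openE)
  define z where "z = y + (e / (2 * norm u)) *\<^sub>R u"
  have "dist y z < e" using \<open>e > 0\<close> \<open>u \<noteq> 0\<close> by (simp add: z_def dist_norm)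
  then have "u \<bullet> z \<le> u \<bullet> q" using e max by fastforce
  moreover have "u \<bullet> z = u \<bullet> y + e / 2 * norm u"
    using \<open>u \<noteq> 0\<close> by (simp add: z_def inner_add_right dot_square_norm power2_eq_square)
  moreover have "0 < e / 2 * norm u" using \<open>e > 0\<close> \<open>u \<noteq> 0\<close> by simp
  ultimately show False using y by linarith
qed

lemma convex_slope_le_across_hyperplane:
  fixes g :: "'a::real_inner \<Rightarrow> real"
  assumes g: "convex_on UNIV g"
    and above: "\<And>w. u \<bullet> w = u \<bullet> q \<Longrightarrow> c \<le> g w"
    and y1: "u \<bullet> y1 < u \<bullet> q" and y2: "u \<bullet> q < u \<bullet> y2"
  shows "(c - g y1) / (u \<bullet> q - u \<bullet> y1) \<le> (g y2 - c) / (u \<bullet> y2 - u \<bullet> q)"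
proof -
  define a1 a2 where "a1 = u \<bullet> q - u \<bullet> y1" and "a2 = u \<bullet> y2 - u \<bullet> q"
  have a: "a1 > 0" "a2 > 0" using y1 y2 by (auto simp: a1_def a2_def)
  define t where "t = a1 / (a1 + a2)"
  have t: "0 \<le> t" "t \<le> 1" "1 - t = a2 / (a1 + a2)"
    using a by (auto simp: t_def field_simps)
  define w where "w = (1 - t) *\<^sub>R y1 + t *\<^sub>R y2"
  have "a2 * (u \<bullet> y1) + a1 * (u \<bullet> y2) = (a1 + a2) * (u \<bullet> q)"
    by (simp add: a1_def a2_def algebra_simps)
  moreover have "u \<bullet> w = (a2 * (u \<bullet> y1) + a1 * (u \<bullet> y2)) / (a1 + a2)"
    unfolding w_def inner_add_right inner_scaleR_right t(3) by (simp add: t_def add_divide_distrib)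
  ultimately have "u \<bullet> w = u \<bullet> q" using a by simp
  then have "c \<le> g w" by (rule above)
  also have "\<dots> \<le> (1 - t) * g y1 + t * g y2"
    unfolding w_def using convex_onD[OF g] t(1,2) by simp
  also have "\<dots> = (a2 * g y1 + a1 * g y2) / (a1 + a2)"
    unfolding t(3) by (simp add: t_def add_divide_distrib)
  finally have "(a1 + a2) * c \<le> a2 * g y1 + a1 * g y2"
    using a by (simp add: pos_le_divide_eq mult.commute)
  then have "a2 * (c - g y1) \<le> a1 * (g y2 - c)" by (simp add: algebra_simps)
  then show ?thesis using a by (simp add: a1_def[symmetric] a2_def[symmetric] divide_simps mult.commute)
qed

lemma real_sets_separation:
  fixes A B :: "real set"
  assumes "A \<noteq> {}" "B \<noteq> {}" "\<And>a b. a \<in> A \<Longrightarrow> b \<in> B \<Longrightarrow> a \<le> b"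
  shows "\<exists>l. (\<forall>a\<in>A. a \<le> l) \<and> (\<forall>b\<in>B. l \<le> b)"
proof -
  have "bdd_above A" using assms by (meson bdd_aboveI ex_in_conv)
  then show ?thesis using assms by (intro exI[of _ "Sup A"]) (auto intro: cSup_upper cSup_least)
qed

lemma sublevel_maximizer_subgradient:
  fixes g :: "'a::euclidean_space \<Rightarrow> real"
  assumes g: "convex_on UNIV g" and slater: "g m < c" and "u \<noteq> 0"
    and q: "g q \<le> c" and max: "\<And>z. g z \<le> c \<Longrightarrow> u \<bullet> z \<le> u \<bullet> q"
  shows "g q = c" and "\<exists>l>0. l *\<^sub>R u \<in> subdifferential g q"
proof -
  have above: "c \<le> g y" if "u \<bullet> q \<le> u \<bullet> y" for y
    using le_on_normal_halfspace_of_sublevel[OF convex_on_continuous[OF open_UNIV g] \<open>u \<noteq> 0\<close> max that] .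
  show gq: "g q = c" using above[of q] q by simp
  have m: "u \<bullet> m < u \<bullet> q" using above[of m] slater by fastforce
  define slope where "slope y = (c - g y) / (u \<bullet> q - u \<bullet> y)" for y
  define slope' where "slope' z = (g z - c) / (u \<bullet> z - u \<bullet> q)" for z
  have "slope y \<le> slope' z" if "u \<bullet> y < u \<bullet> q" "u \<bullet> q < u \<bullet> z" for y z
    unfolding slope_def slope'_def
    by (rule convex_slope_le_across_hyperplane[OF g _ that]) (simp add: above)
  moreover have "u \<bullet> q < u \<bullet> (q + u)" using \<open>u \<noteq> 0\<close> by (simp add: inner_add_right)
  ultimately obtain l where slope_le_l: "\<And>y. u \<bullet> y < u \<bullet> q \<Longrightarrow> slope y \<le> l"
    and l_le: "\<And>z. u \<bullet> q < u \<bullet> z \<Longrightarrow> l \<le> slope' z"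
    using real_sets_separation[of "slope ` {y. u \<bullet> y < u \<bullet> q}" "slope' ` {z. u \<bullet> q < u \<bullet> z}"] m
    by blast
  have "0 < slope m" using slater m by (simp add: slope_def)
  then have "l > 0" using slope_le_l[OF m] by linarith
  moreover have "g q + (l *\<^sub>R u) \<bullet> (y - q) \<le> g y" for y
  proof -
    have "g q + l * (u \<bullet> y - u \<bullet> q) \<le> g y"
    proof (cases "u \<bullet> y" "u \<bullet> q" rule: linorder_cases)
      case less
      then show ?thesis
        using slope_le_l[OF less] gq by (simp add: slope_def pos_divide_le_eq algebra_simps)
    next
      case equal
      then show ?thesis using above[of y] gq by simp
    next
      case greater
      then show ?thesis
        using l_le[OF greater] gq by (simp add: slope'_def pos_le_divide_eq algebra_simps)
    qed
    then show ?thesis by (simp add: inner_diff_right right_diff_distrib)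
  qed
  then have "l *\<^sub>R u \<in> subdifferential g q" by (simp add: subdifferential_def)
  ultimately show "\<exists>l>0. l *\<^sub>R u \<in> subdifferential g q" by blast
qed

lemma exists_level_point_with_parallel_subgradient:
  fixes g :: "'a::euclidean_space \<Rightarrow> real"
  assumes g: "convex_on UNIV g" and slater: "g m < c"
    and bnd: "bounded {v. g v \<le> c}" and "u \<noteq> 0"
  shows "\<exists>q l. g q = c \<and> l > 0 \<and> l *\<^sub>R u \<in> subdifferential g q"
proof -
  have "compact {v. g v \<le> c}"
    using bnd closed_sublevel[OF g] by (simp add: compact_eq_bounded_closed)
  moreover have "{v. g v \<le> c} \<noteq> {}" using slater by (auto intro!: exI[of _ m])
  moreover have "continuous_on {v. g v \<le> c} (\<lambda>z. u \<bullet> z)" by (intro continuous_intros)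
  ultimately obtain q where "g q \<le> c" and "\<And>z. g z \<le> c \<Longrightarrow> u \<bullet> z \<le> u \<bullet> q"
    by (blast dest: continuous_attains_sup)
  then show ?thesis using sublevel_maximizer_subgradient[OF g slater \<open>u \<noteq> 0\<close>] by blast
qed

lemma infdist_eq_dist_closest_point:
  "closed S \<Longrightarrow> S \<noteq> {} \<Longrightarrow> infdist a S = dist a (closest_point S a)"
  by (simp add: infdist_eq_setdist setdist_closest_point)

lemma infdist_closest_point_le:
  assumes B: "convex B" "closed B" and X: "closed X" "X \<noteq> {}" "X \<subseteq> B"
  shows "infdist (closest_point B z) X \<le> infdist z X"
proof -
  define p where "p = closest_point X z"
  have "p \<in> X" unfolding p_def using closest_point_in_set[OF X(1,2)] .
  moreover have "closest_point B p = p" using closest_point_self \<open>p \<in> X\<close> X(3) by blast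
  ultimately have "infdist (closest_point B z) X \<le> dist (closest_point B z) (closest_point B p)"
    using infdist_le by metis
  also have "\<dots> \<le> dist z p" using closest_point_lipschitz[OF B] \<open>p \<in> X\<close> X(3) by blast
  finally show ?thesis unfolding p_def using infdist_eq_dist_closest_point[OF X(1,2)] by simp
qed

lemma sublevel_error_bound:
  fixes g :: "'a::euclidean_space \<Rightarrow> real"
  assumes g: "convex_on UNIV g" and bnd: "bounded {v. g v \<le> 0}"
    and "\<epsilon> > 0" and slater: "g m < - \<epsilon>"
    and grad_lb: "\<And>v w. g v = - \<epsilon> \<Longrightarrow> w \<in> subdifferential g v \<Longrightarrow> \<sigma> \<le> norm w"
    and x: "0 < g x"
  shows "\<sigma> * infdist x {v. g v \<le> 0} \<le> g x"
proof -
  define X where "X = {v. g v \<le> 0}"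
  have X: "closed X" "convex X" "X \<noteq> {}"
    using closed_sublevel[OF g] convex_sublevel[OF g] slater \<open>\<epsilon> > 0\<close>
    by (auto simp: X_def intro!: exI[of _ m])
  define p where "p = closest_point X x"
  define u where "u = x - p"
  have "p \<in> X" unfolding p_def using closest_point_in_set[OF X(1,3)] .
  then have "u \<noteq> 0" using x by (auto simp: u_def X_def)
  have "u \<bullet> z \<le> u \<bullet> p" if "g z \<le> 0" for z
    using closest_point_dot[OF X(2,1), of z x] that by (simp add: X_def u_def p_def inner_diff_right)
  moreover have "g m < 0" "g p \<le> 0" using slater \<open>\<epsilon> > 0\<close> \<open>p \<in> X\<close> by (auto simp: X_def)
  ultimately obtain l0 where gp: "g p = 0" and l0: "l0 > 0" "l0 *\<^sub>R u \<in> subdifferential g p"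
    using sublevel_maximizer_subgradient[OF g _ \<open>u \<noteq> 0\<close>] by metis
  have "bounded {v. g v \<le> - \<epsilon>}"
    by (rule bounded_subset[OF bnd]) (use \<open>\<epsilon> > 0\<close> in auto)
  then obtain q l where gq: "g q = - \<epsilon>" and l: "l > 0" "l *\<^sub>R u \<in> subdifferential g q"
    using exists_level_point_with_parallel_subgradient[OF g slater _ \<open>u \<noteq> 0\<close>] by blast
  have "\<sigma> \<le> l * norm u" using grad_lb[OF gq l(2)] l(1) by simp
  also have "l \<le> l0"
  proof -
    have "g p + (l0 *\<^sub>R u) \<bullet> (q - p) \<le> g q" "g q + (l *\<^sub>R u) \<bullet> (p - q) \<le> g p"
      using l0(2) l(2) by (simp_all add: subdifferential_def)
    then have "l0 * (u \<bullet> (q - p)) \<le> - \<epsilon>" "l * (u \<bullet> (p - q)) \<le> \<epsilon>"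
      using gp gq by simp_all
    moreover have "u \<bullet> (q - p) = - (u \<bullet> (p - q))" by (simp add: inner_diff_right)
    ultimately have "l * (u \<bullet> (p - q)) \<le> l0 * (u \<bullet> (p - q))" and "0 < l0 * (u \<bullet> (p - q))"
      using \<open>\<epsilon> > 0\<close> by auto
    moreover have "0 < u \<bullet> (p - q)" using calculation(2) l0(1) zero_less_mult_pos by blast
    ultimately show ?thesis by simp
  qed
  finally have "\<sigma> * norm u \<le> l0 * norm u * norm u" by (simp add: mult_right_mono)
  also have "\<dots> = g p + (l0 *\<^sub>R u) \<bullet> (x - p)"
    using gp by (simp add: u_def dot_square_norm power2_eq_square)
  also have "\<dots> \<le> g x" using l0(2) by (simp add: subdifferential_def)
  finally show ?thesis
    using infdist_eq_dist_closest_point[OF X(1,3)] by (simp add: X_def p_def u_def dist_norm)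
qed

lemma subgradient_le_infdist_sublevel:
  fixes g :: "'a::euclidean_space \<Rightarrow> real"
  assumes g: "convex_on UNIV g" and X: "{v. g v \<le> 0} \<noteq> {}"
    and s: "s \<in> subdifferential g x" "norm s \<le> G"
  shows "g x \<le> G * infdist x {v. g v \<le> 0}"
proof -
  define p where "p = closest_point {v. g v \<le> 0} x"
  have "g p \<le> 0"
    using closest_point_in_set[OF closed_sublevel[OF g] X] by (simp add: p_def)
  moreover have "g x + s \<bullet> (p - x) \<le> g p" using s(1) by (simp add: subdifferential_def)
  ultimately have "g x \<le> s \<bullet> (x - p)" by (simp add: inner_diff_right)
  also have "\<dots> \<le> G * norm (x - p)"
    using norm_cauchy_schwarz[of s "x - p"] s(2) by (meson mult_right_mono norm_ge_zero order_trans)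
  finally show ?thesis
    using infdist_eq_dist_closest_point[OF closed_sublevel[OF g] X] by (simp add: p_def dist_norm)
qed

(* Projection of y onto the half-space {z. a + s \<bullet> z \<le> 0}; for s = 0 the factor divides
   by zero and the map is the identity. *)
definition halfspace_proj :: "real \<Rightarrow> 'a::real_inner \<Rightarrow> 'a \<Rightarrow> 'a" where
  "halfspace_proj a s y = y - (pos_part (a + s \<bullet> y) / (norm s)\<^sup>2) *\<^sub>R s"

lemma halfspace_proj_zero [simp]: "halfspace_proj a 0 y = y"
  by (simp add: halfspace_proj_def)

lemma norm_diff_scaleR_square:
  fixes y :: "'a::real_inner"
  shows "(norm (y - k *\<^sub>R s))\<^sup>2 = (norm y)\<^sup>2 - 2 * k * (s \<bullet> y) + k\<^sup>2 * (norm s)\<^sup>2"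
  unfolding power2_norm_eq_inner
  by (simp add: inner_diff_left inner_diff_right inner_commute algebra_simps power2_eq_square)

lemma halfspace_proj_dist_square:
  assumes u: "a + s \<bullet> u \<le> 0"
  shows "(norm (halfspace_proj a s y - u))\<^sup>2
         \<le> (norm (y - u))\<^sup>2 - (pos_part (a + s \<bullet> y))\<^sup>2 / (norm s)\<^sup>2"
proof -
  define b N where "b = a + s \<bullet> y" and "N = (norm s)\<^sup>2"
  define k where "k = pos_part b / N"
  have "k \<ge> 0" by (simp add: k_def pos_part_def N_def)
  have "b \<le> s \<bullet> (y - u)" using u by (simp add: b_def inner_diff_right)
  have "(norm (halfspace_proj a s y - u))\<^sup>2 = (norm ((y - u) - k *\<^sub>R s))\<^sup>2"
    by (simp add: halfspace_proj_def k_def b_def N_def algebra_simps)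
  also have "\<dots> = (norm (y - u))\<^sup>2 - 2 * k * (s \<bullet> (y - u)) + k\<^sup>2 * N"
    unfolding N_def by (rule norm_diff_scaleR_square)
  also have "\<dots> \<le> (norm (y - u))\<^sup>2 - 2 * (k * b) + k\<^sup>2 * N"
    using mult_left_mono[OF \<open>b \<le> s \<bullet> (y - u)\<close> \<open>k \<ge> 0\<close>] by simp
  also have "k * b = (pos_part b)\<^sup>2 / N"
    by (simp add: k_def pos_part_def max_def power2_eq_square)
  also have "k\<^sup>2 * N = (pos_part b)\<^sup>2 / N"
    by (cases "N = 0") (simp_all add: k_def power2_eq_square)
  finally show ?thesis by (simp add: b_def N_def)
qed

lemma halfspace_proj_dist_le:
  "a + s \<bullet> u \<le> 0 \<Longrightarrow> norm (halfspace_proj a s y - u) \<le> norm (y - u)"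
  using halfspace_proj_dist_square[of a s u y]
  by (smt (verit) divide_nonneg_nonneg norm_ge_zero power2_le_imp_le zero_le_power2)

lemma pos_part_diff_square_le: "(pos_part a - pos_part b)\<^sup>2 \<le> (pos_part a - pos_part b) * (a - b)"
proof (cases "a \<le> 0"; cases "b \<le> 0")
  assume "a \<le> 0" "\<not> b \<le> 0"
  then show ?thesis using mult_nonpos_nonneg[of a b]
    by (simp add: pos_part_def max_def power2_eq_square algebra_simps)
next
  assume "\<not> a \<le> 0" "b \<le> 0"
  then show ?thesis using mult_nonneg_nonpos[of a b]
    by (simp add: pos_part_def max_def power2_eq_square algebra_simps)
qed (auto simp: pos_part_def max_def power2_eq_square algebra_simps)

lemma halfspace_proj_nonexpansive:
  "norm (halfspace_proj a s y - halfspace_proj a s x) \<le> norm (y - x)"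
proof (cases "s = 0")
  case False
  define N where "N = (norm s)\<^sup>2"
  have "N > 0" using False by (simp add: N_def)
  define p q where "p = pos_part (a + s \<bullet> y)" and "q = pos_part (a + s \<bullet> x)"
  have sq: "(p - q)\<^sup>2 \<le> (p - q) * (s \<bullet> (y - x))"
    using pos_part_diff_square_le[of "a + s \<bullet> y" "a + s \<bullet> x"]
    by (simp add: p_def q_def inner_diff_right)
  define k where "k = (p - q) / N"
  have "(norm (halfspace_proj a s y - halfspace_proj a s x))\<^sup>2 = (norm ((y - x) - k *\<^sub>R s))\<^sup>2"
    by (simp add: halfspace_proj_def k_def p_def q_def N_def algebra_simps diff_divide_distrib)
  also have "\<dots> = (norm (y - x))\<^sup>2 - 2 * k * (s \<bullet> (y - x)) + k\<^sup>2 * N"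
    unfolding N_def by (rule norm_diff_scaleR_square)
  also have "\<dots> = (norm (y - x))\<^sup>2 - (2 * ((p - q) * (s \<bullet> (y - x))) - (p - q)\<^sup>2) / N"
    using \<open>N > 0\<close> by (simp add: k_def field_simps power2_eq_square)
  also have "\<dots> \<le> (norm (y - x))\<^sup>2"
  proof -
    have "0 \<le> 2 * ((p - q) * (s \<bullet> (y - x))) - (p - q)\<^sup>2"
      using sq zero_le_power2[of "p - q"] by linarith
    then show ?thesis using \<open>N > 0\<close> by simp
  qed
  finally show ?thesis using power2_le_imp_le norm_ge_zero by blast
qed simp

lemma halfspace_proj_infdist_contraction:
  fixes g :: "'a::euclidean_space \<Rightarrow> real"
  assumes g: "convex_on UNIV g" and X: "{v. g v \<le> 0} \<noteq> {}"
    and s: "s \<in> subdifferential g x" "norm s \<le> G"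
    and "0 \<le> \<sigma>" and error_bound: "0 < g x \<Longrightarrow> \<sigma> * infdist x {v. g v \<le> 0} \<le> g x"
  shows "infdist (halfspace_proj (g x - s \<bullet> x) s x) {v. g v \<le> 0}
         \<le> sqrt (1 - \<sigma>\<^sup>2 / G\<^sup>2) * infdist x {v. g v \<le> 0}"
proof (cases "g x \<le> 0")
  case True
  then show ?thesis by (simp add: halfspace_proj_def pos_part_def)
next
  case False
  define X d where "X = {v. g v \<le> 0}" and "d = infdist x X"
  define p where "p = closest_point X x"
  have "p \<in> X" unfolding p_def X_def using closest_point_in_set[OF closed_sublevel[OF g] X] .
  have d: "d = norm (x - p)" "d \<ge> 0"
    using infdist_eq_dist_closest_point[OF closed_sublevel[OF g] X]
    by (simp_all add: d_def p_def X_def dist_norm)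
  have "g x + s \<bullet> (p - x) \<le> g p" using s(1) by (simp add: subdifferential_def)
  then have halfspace: "(g x - s \<bullet> x) + s \<bullet> p \<le> 0"
    using \<open>p \<in> X\<close> by (simp add: X_def inner_diff_right)
  then have "s \<noteq> 0" using False by auto
  have "\<sigma>\<^sup>2 / G\<^sup>2 * d\<^sup>2 \<le> (g x)\<^sup>2 / (norm s)\<^sup>2"
  proof -
    have "(\<sigma> * d)\<^sup>2 \<le> (g x)\<^sup>2"
      using error_bound False \<open>0 \<le> \<sigma>\<close> d(2) by (simp add: d_def X_def power_mono)
    then have "\<sigma>\<^sup>2 / G\<^sup>2 * d\<^sup>2 \<le> (g x)\<^sup>2 / G\<^sup>2" by (simp add: power_mult_distrib divide_right_mono)
    also have "\<dots> \<le> (g x)\<^sup>2 / (norm s)\<^sup>2"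
      using \<open>s \<noteq> 0\<close> s(2) by (intro divide_left_mono power_mono mult_pos_pos) auto
    finally show ?thesis .
  qed
  moreover have "pos_part (g x - s \<bullet> x + s \<bullet> x) = g x" using False by (simp add: pos_part_def)
  ultimately have "(norm (halfspace_proj (g x - s \<bullet> x) s x - p))\<^sup>2 \<le> (1 - \<sigma>\<^sup>2 / G\<^sup>2) * d\<^sup>2"
    using halfspace_proj_dist_square[OF halfspace, of x] d(1) by (simp add: algebra_simps)
  then have "norm (halfspace_proj (g x - s \<bullet> x) s x - p) \<le> sqrt (1 - \<sigma>\<^sup>2 / G\<^sup>2) * d"
    using real_le_rsqrt d(2) by (fastforce simp: real_sqrt_mult)
  moreover have "infdist (halfspace_proj (g x - s \<bullet> x) s x) X \<le> norm (halfspace_proj (g x - s \<bullet> x) s x - p)"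
    using infdist_le[OF \<open>p \<in> X\<close>] by (simp add: dist_norm)
  ultimately show ?thesis by (simp add: X_def d_def)
qed

lemma affine_recursion_bound:
  fixes d :: "nat \<Rightarrow> real"
  assumes "0 \<le> q" "q < 1" "0 \<le> c" "d 1 \<le> D"
    and step: "\<And>t. t \<in> {1..T} \<Longrightarrow> d (Suc t) \<le> q * d t + c"
  shows "n \<le> T \<Longrightarrow> d (Suc n) \<le> q ^ n * D + c / (1 - q)"
proof (induction n)
  case 0
  have "0 \<le> c / (1 - q)" using assms(2,3) by simp
  then show ?case using assms(4) by simp
next
  case (Suc n)
  then have "d (Suc (Suc n)) \<le> q * d (Suc n) + c" using step by simp
  also have "\<dots> \<le> q * (q ^ n * D + c / (1 - q)) + c"
    using Suc \<open>0 \<le> q\<close> by (simp add: mult_left_mono)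
  also have "\<dots> = q ^ Suc n * D + c / (1 - q)"
    using \<open>q < 1\<close> by (simp add: field_simps)
  finally show ?case .
qed

lemma sqrt_one_minus_power_le_exp:
  assumes "a \<le> 1"
  shows "sqrt (1 - a) ^ n \<le> exp (- (a * n) / 2)"
proof -
  have "sqrt (1 - a) \<le> sqrt (exp (- a))"
    using exp_ge_add_one_self[of "- a"] by simp
  also have "exp (- a) = (exp (- a / 2))\<^sup>2"
    by (simp add: power2_eq_square exp_add[symmetric])
  then have "sqrt (exp (- a)) = exp (- a / 2)" by simp
  finally have "sqrt (1 - a) ^ n \<le> exp (- a / 2) ^ n"
    using assms by (simp add: power_mono)
  also have "\<dots> = exp (- (a * n) / 2)"
    by (simp add: exp_of_nat_mult[symmetric] mult.commute)
  finally show ?thesis .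
qed

lemma gradient_step_regret:
  fixes f :: "nat \<Rightarrow> 'a::real_inner \<Rightarrow> real" and x G :: "nat \<Rightarrow> 'a"
  assumes "\<eta> > 0"
    and convex: "\<And>t. t \<in> {1..T} \<Longrightarrow> convex_on UNIV (f t)"
    and grad: "\<And>t. t \<in> {1..T} \<Longrightarrow> (f t has_derivative (\<lambda>h. G t \<bullet> h)) (at (x t))"
    and bound: "\<And>t. t \<in> {1..T} \<Longrightarrow> norm (G t) \<le> L"
    and closer: "\<And>t. t \<in> {1..T} \<Longrightarrow> norm (x (Suc t) - u) \<le> norm (x t - \<eta> *\<^sub>R G t - u)"
    and start: "norm (x 1 - u) \<le> D"
  shows "(\<Sum>t=1..T. f t (x t)) - (\<Sum>t=1..T. f t u) \<le> D\<^sup>2 / (2 * \<eta>) + T * (\<eta> * L\<^sup>2 / 2)"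
proof -
  define a where "a t = (norm (x t - u))\<^sup>2" for t
  have step: "f t (x t) - f t u \<le> (a t - a (Suc t)) / (2 * \<eta>) + \<eta> * L\<^sup>2 / 2"
    if t: "t \<in> {1..T}" for t
  proof -
    have "f t (x t) - f t u \<le> G t \<bullet> (x t - u)"
      using convex_on_gradient_inequality[OF convex[OF t] grad[OF t], of u]
      by (simp add: inner_diff_right)
    moreover have "2 * \<eta> * (G t \<bullet> (x t - u)) = a t - (norm (x t - \<eta> *\<^sub>R G t - u))\<^sup>2 + \<eta>\<^sup>2 * (norm (G t))\<^sup>2"
      using norm_diff_scaleR_square[of "x t - u" \<eta> "G t"]
      by (simp add: a_def algebra_simps)
    moreover have "a (Suc t) \<le> (norm (x t - \<eta> *\<^sub>R G t - u))\<^sup>2"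
      unfolding a_def using closer[OF t] by (simp add: power_mono)
    moreover have "\<eta>\<^sup>2 * (norm (G t))\<^sup>2 \<le> \<eta>\<^sup>2 * L\<^sup>2"
      using bound[OF t] by (simp add: power_mono mult_left_mono)
    ultimately have "2 * \<eta> * (f t (x t) - f t u) \<le> a t - a (Suc t) + \<eta>\<^sup>2 * L\<^sup>2"
      using \<open>\<eta> > 0\<close> by (smt (verit) mult_left_mono)
    then show ?thesis
      using \<open>\<eta> > 0\<close> by (simp add: field_simps power2_eq_square)
  qed
  have "(\<Sum>t=1..T. f t (x t)) - (\<Sum>t=1..T. f t u) \<le> (\<Sum>t=1..T. (a t - a (Suc t)) / (2 * \<eta>) + \<eta> * L\<^sup>2 / 2)"
    unfolding sum_subtractf[symmetric] by (rule sum_mono) (rule step)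
  also have "\<dots> = (a 1 - a (Suc T)) / (2 * \<eta>) + T * (\<eta> * L\<^sup>2 / 2)"
    using sum_Suc_diff[of 1 T a]
    by (simp add: sum.distrib sum_divide_distrib[symmetric] sum_subtractf)
  also have "\<dots> \<le> D\<^sup>2 / (2 * \<eta>) + T * (\<eta> * L\<^sup>2 / 2)"
  proof -
    have "a 1 \<le> D\<^sup>2" unfolding a_def using start by (simp add: power_mono)
    then have "a 1 - a (Suc T) \<le> D\<^sup>2"
      using zero_le_power2[of "norm (x (Suc T) - u)"] unfolding a_def by linarith
    then show ?thesis using \<open>\<eta> > 0\<close> by (simp add: divide_right_mono)
  qed
  finally show ?thesis .
qed

lemma regret_le:
  assumes "{v. g v \<le> 0} \<noteq> {}"
    and "\<And>u. g u \<le> 0 \<Longrightarrow> (\<Sum>t=1..T. f t (x t)) - (\<Sum>t=1..T. f t u) \<le> B"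
  shows "regret f g x T \<le> B"
proof -
  have "(\<Sum>t=1..T. f t (x t)) - B \<le> (INF u\<in>{v. g v \<le> 0}. \<Sum>t=1..T. f t u)"
    using assms by (intro cINF_greatest) (auto simp: algebra_simps)
  then show ?thesis unfolding regret_def by simp
qed

lemma ogd_polyak_step_eq:
  "ogd_polyak_step g \<eta> \<rho> R x gf s
     = closest_point (cball 0 R) (halfspace_proj (g x - s \<bullet> x + \<rho>) s (x - \<eta> *\<^sub>R gf))"
  by (simp add: ogd_polyak_step_def halfspace_proj_def Let_def inner_diff_right algebra_simps)

locale ogd_polyak_run =
  fixes g :: "'a::euclidean_space \<Rightarrow> real"
    and f :: "nat \<Rightarrow> 'a \<Rightarrow> real" and gradf :: "nat \<Rightarrow> 'a \<Rightarrow> 'a"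
    and x s :: "nat \<Rightarrow> 'a" and T :: nat
    and R G_f G_g \<sigma> \<epsilon> \<eta> :: real
  assumes g_convex: "convex_on UNIV g"
    and feasible_bounded: "{v. g v \<le> 0} \<subseteq> cball 0 R"
    and f_convex: "\<And>t. t \<in> {1..T} \<Longrightarrow> convex_on UNIV (f t)"
    and f_grad: "\<And>t v. t \<in> {1..T} \<Longrightarrow> (f t has_derivative (\<lambda>h. gradf t v \<bullet> h)) (at v)"
    and grad_bound: "\<And>t v. t \<in> {1..T} \<Longrightarrow> v \<in> cball 0 R \<Longrightarrow> norm (gradf t v) \<le> G_f"
    and subgrad_bound: "\<And>v w. v \<in> cball 0 R \<Longrightarrow> w \<in> subdifferential g v \<Longrightarrow> norm w \<le> G_g"
    and eps_pos: "\<epsilon> > 0"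
    and level_nonempty: "{v. g v = - \<epsilon>} \<noteq> {}"
    and subgrad_lower: "\<And>v w. g v = - \<epsilon> \<Longrightarrow> w \<in> subdifferential g v \<Longrightarrow> \<sigma> \<le> norm w"
    and sigma_pos: "\<sigma> > 0"
    and eta_pos: "\<eta> > 0"
    and x1: "x 1 \<in> cball 0 R"
    and s_sub: "\<And>t. t \<in> {1..T} \<Longrightarrow> s t \<in> subdifferential g (x t)"
    and x_step: "\<And>t. t \<in> {1..T} \<Longrightarrow> x (Suc t) = ogd_polyak_step g \<eta> 0 R (x t) (gradf t (x t)) (s t)"
begin

abbreviation feasible :: "'a set" where
  "feasible \<equiv> {v. g v \<le> 0}"

(* sqrt gamma in the paper's notation, so that xi = 1 - contraction_factor. *)
abbreviation contraction_factor :: real where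
  "contraction_factor \<equiv> sqrt (1 - \<sigma>\<^sup>2 / G_g\<^sup>2)"

lemma exists_below_level: "\<exists>m. g m < - \<epsilon>"
proof (rule ccontr)
  obtain v where v: "g v = - \<epsilon>" using level_nonempty by auto
  assume "\<nexists>m. g m < - \<epsilon>"
  then have "0 \<in> subdifferential g v" using v by (auto simp: subdifferential_def not_less)
  then show False using subgrad_lower[OF v] sigma_pos by fastforce
qed

lemma feasible_nonempty: "feasible \<noteq> {}"
proof -
  obtain m where "g m < - \<epsilon>" using exists_below_level by blast
  then have "m \<in> feasible" using eps_pos by simp
  then show ?thesis by blast
qed

lemma error_bound:
  assumes "0 < g z"
  shows "\<sigma> * infdist z feasible \<le> g z"
proof -
  obtain m where "g m < - \<epsilon>" using exists_below_level by blast
  moreover have "bounded feasible" using bounded_subset[OF bounded_cball feasible_bounded] .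
  ultimately show ?thesis using sublevel_error_bound[OF g_convex _ eps_pos _ subgrad_lower assms] by simp
qed

lemma sigma_le_G_g: "\<sigma> \<le> G_g"
proof -
  obtain e :: 'a where "e \<in> Basis" using nonempty_Basis by blast
  then have "e \<noteq> 0" by auto
  have "bounded {v. g v \<le> - \<epsilon>}"
    by (rule bounded_subset[OF bounded_cball]) (use feasible_bounded eps_pos in auto)
  then obtain q l where "g q = - \<epsilon>" "l *\<^sub>R e \<in> subdifferential g q"
    using exists_below_level exists_level_point_with_parallel_subgradient[OF g_convex _ _ \<open>e \<noteq> 0\<close>]
    by blast
  moreover have "q \<in> feasible" using \<open>g q = - \<epsilon>\<close> eps_pos by simp
  then have "q \<in> cball 0 R" using feasible_bounded by blast
  ultimately show ?thesis using subgrad_lower subgrad_bound by force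
qed

lemma contraction_factor_bounds: "0 \<le> contraction_factor" "contraction_factor < 1"
proof -
  have "0 < G_g" using sigma_le_G_g sigma_pos by linarith
  moreover have "\<sigma>\<^sup>2 \<le> G_g\<^sup>2" using power_mono[OF sigma_le_G_g] sigma_pos by simp
  ultimately show "0 \<le> contraction_factor" "contraction_factor < 1"
    using sigma_pos by simp_all
qed

lemma iterate_in_ball:
  assumes "t \<in> {1..T}"
  shows "x t \<in> cball 0 R"
proof (cases "t = 1")
  case False
  then obtain n where t: "t = Suc n" and n: "n \<in> {1..T}" using assms by (cases t) auto
  have "cball (0::'a) R \<noteq> {}" using x1 by blast
  then show ?thesis
    unfolding t x_step[OF n] ogd_polyak_step_eq by (rule closest_point_in_set[OF closed_cball])
qed (use x1 in simp)

lemma radius_nonneg: "0 \<le> R"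
  using x1 norm_ge_zero order_trans by (metis mem_cball_0)

lemma iterate_Suc:
  "t \<in> {1..T} \<Longrightarrow> x (Suc t) = closest_point (cball 0 R)
     (halfspace_proj (g (x t) - s t \<bullet> x t) (s t) (x t - \<eta> *\<^sub>R gradf t (x t)))"
  using x_step by (simp add: ogd_polyak_step_eq)

lemma halfspace_contains_feasible:
  assumes "t \<in> {1..T}" and "g u \<le> 0"
  shows "(g (x t) - s t \<bullet> x t) + s t \<bullet> u \<le> 0"
proof -
  have "g (x t) + s t \<bullet> (u - x t) \<le> g u" using s_sub[OF assms(1)] by (simp add: subdifferential_def)
  then show ?thesis using assms(2) by (simp add: inner_diff_right)
qed

lemma iterate_closer:
  assumes t: "t \<in> {1..T}" and u: "g u \<le> 0"
  shows "norm (x (Suc t) - u) \<le> norm (x t - \<eta> *\<^sub>R gradf t (x t) - u)"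
proof -
  let ?z = "halfspace_proj (g (x t) - s t \<bullet> x t) (s t) (x t - \<eta> *\<^sub>R gradf t (x t))"
  have "closest_point (cball 0 R) u = u" using u feasible_bounded by (auto intro: closest_point_self)
  then have "dist (x (Suc t)) u \<le> dist ?z u"
    using closest_point_lipschitz[of "cball 0 R" ?z u] radius_nonneg iterate_Suc[OF t] by simp
  also have "\<dots> \<le> norm (x t - \<eta> *\<^sub>R gradf t (x t) - u)"
    using halfspace_proj_dist_le[OF halfspace_contains_feasible[OF t u]] by (simp add: dist_norm)
  finally show ?thesis by (simp add: dist_norm)
qed

lemma regret_bound: "regret f g x T \<le> (2 * R)\<^sup>2 / (2 * \<eta>) + T * (\<eta> * G_f\<^sup>2 / 2)"
proof (rule regret_le[OF feasible_nonempty])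
  fix u assume u: "g u \<le> 0"
  have "norm (x 1 - u) \<le> norm (x 1) + norm u" by (rule norm_triangle_ineq4)
  also have "\<dots> \<le> 2 * R" using x1 u feasible_bounded by auto
  finally have "norm (x 1 - u) \<le> 2 * R" .
  then show "(\<Sum>t=1..T. f t (x t)) - (\<Sum>t=1..T. f t u) \<le> (2 * R)\<^sup>2 / (2 * \<eta>) + T * (\<eta> * G_f\<^sup>2 / 2)"
    by (intro gradient_step_regret[where G = "\<lambda>t. gradf t (x t)"] eta_pos f_convex f_grad
        grad_bound iterate_in_ball iterate_closer u)
qed

lemma infdist_step:
  assumes t: "t \<in> {1..T}"
  shows "infdist (x (Suc t)) feasible \<le> contraction_factor * infdist (x t) feasible + \<eta> * G_f"
proof -
  let ?P = "halfspace_proj (g (x t) - s t \<bullet> x t) (s t)"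
  let ?y = "x t - \<eta> *\<^sub>R gradf t (x t)"
  have "infdist (x (Suc t)) feasible \<le> infdist (?P ?y) feasible"
    unfolding iterate_Suc[OF t]
    using infdist_closest_point_le[OF convex_cball closed_cball closed_sublevel[OF g_convex]
        feasible_nonempty feasible_bounded] .
  also have "\<dots> \<le> infdist (?P (x t)) feasible + dist (?P ?y) (?P (x t))"
    by (rule infdist_triangle)
  also have "dist (?P ?y) (?P (x t)) \<le> \<eta> * norm (gradf t (x t))"
    using halfspace_proj_nonexpansive[of _ _ ?y "x t"] eta_pos by (simp add: dist_norm)
  also have "\<dots> \<le> \<eta> * G_f"
    using grad_bound[OF t iterate_in_ball[OF t]] eta_pos by simp
  also have "infdist (?P (x t)) feasible \<le> contraction_factor * infdist (x t) feasible"
    using halfspace_proj_infdist_contraction[OF g_convex feasible_nonempty s_sub[OF t]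
        subgrad_bound[OF iterate_in_ball[OF t] s_sub[OF t]]] sigma_pos error_bound by simp
  finally show ?thesis by simp
qed

lemma infdist_bound:
  assumes t: "t \<in> {1..T}"
  shows "infdist (x t) feasible
         \<le> contraction_factor ^ (t - 1) * (2 * R) + \<eta> * G_f / (1 - contraction_factor)"
proof -
  have "1 \<in> {1..T}" using t by simp
  then have "0 \<le> G_f" using grad_bound[of 1 "x 1"] x1 norm_ge_zero order_trans by metis
  obtain v where "v \<in> feasible" using feasible_nonempty by blast
  then have "infdist (x 1) feasible \<le> norm (x 1) + norm v"
    using infdist_le[of v feasible "x 1"] norm_triangle_ineq4[of "x 1" v] by (simp add: dist_norm)
  also have "\<dots> \<le> 2 * R" using x1 \<open>v \<in> feasible\<close> feasible_bounded by auto
  finally have "infdist (x (Suc (t - 1))) feasible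
      \<le> contraction_factor ^ (t - 1) * (2 * R) + \<eta> * G_f / (1 - contraction_factor)"
    by (intro affine_recursion_bound[where d = "\<lambda>t. infdist (x t) feasible"]
        contraction_factor_bounds infdist_step mult_nonneg_nonneg)
      (use eta_pos \<open>0 \<le> G_f\<close> t in auto)
  then show ?thesis using t by simp
qed

lemma constraint_bound:
  assumes t: "t \<in> {1..T}"
  shows "g (x t) \<le> G_g * (contraction_factor ^ (t - 1) * (2 * R) + \<eta> * G_f / (1 - contraction_factor))"
proof -
  have "0 \<le> G_g" using sigma_le_G_g sigma_pos by linarith
  then show ?thesis
    using subgradient_le_infdist_sublevel[OF g_convex feasible_nonempty s_sub[OF t]
        subgrad_bound[OF iterate_in_ball[OF t] s_sub[OF t]]] infdist_bound[OF t]
    by (meson mult_left_mono order_trans)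
qed

end

theorem corollary3:
  fixes g :: "'a::euclidean_space \<Rightarrow> real"
    and f :: "nat \<Rightarrow> 'a \<Rightarrow> real"
    and gradf :: "nat \<Rightarrow> 'a \<Rightarrow> 'a"
    and x s :: "nat \<Rightarrow> 'a"
    and T :: nat
    and R G_f G_g \<sigma> \<epsilon> eta rho :: real
  assumes T_pos: "T \<ge> 1"
    and g_convex: "convex_on UNIV g"
    \<comment> \<open>(A1)\<close>
    and R_pos: "R > 0"
    and A1: "{v. g v \<le> 0} \<subseteq> cball 0 R"
    \<comment> \<open>(A2)\<close>
    and f_convex: "\<And>t. t \<in> {1..T} \<Longrightarrow> convex_on UNIV (f t)"
    and f_grad: "\<And>t v. t \<in> {1..T} \<Longrightarrow> (f t has_derivative (\<lambda>h. gradf t v \<bullet> h)) (at v)"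
    and Gf_pos: "G_f > 0"
    and A2: "\<And>t v. t \<in> {1..T} \<Longrightarrow> v \<in> cball 0 R \<Longrightarrow> norm (gradf t v) \<le> G_f"
    \<comment> \<open>(A3)\<close>
    and Gg_pos: "G_g > 0"
    and A3: "\<And>v w. v \<in> cball 0 R \<Longrightarrow> w \<in> subdifferential g v \<Longrightarrow> norm w \<le> G_g"
    \<comment> \<open>(A4)\<close>
    and sigma_pos: "\<sigma> > 0" and eps_pos: "\<epsilon> > 0"
    and A4_nonempty: "{v. g v = - \<epsilon>} \<noteq> {}"
    and A4: "\<And>v w. g v = - \<epsilon> \<Longrightarrow> w \<in> subdifferential g v \<Longrightarrow> norm w \<ge> \<sigma>"
    \<comment> \<open>algorithm run\<close>
    and eta_def: "eta = 2 * R / (G_f * sqrt T)"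
    and rho_def: "rho = 0"
    and x1: "x 1 \<in> cball 0 R"
    and s_sub: "\<And>t. t \<in> {1..T} \<Longrightarrow> s t \<in> subdifferential g (x t)"
    and x_step: "\<And>t. t \<in> {1..T} \<Longrightarrow>
                   x (Suc t) = ogd_polyak_step g eta rho R (x t) (gradf t (x t)) (s t)"
  shows "regret f g x T \<le> 2 * R * G_f * sqrt T
       \<and> (\<forall>t\<in>{1..T}. g (x t) \<le>
            2 * R * G_g * exp (- (\<sigma>\<^sup>2 * (real t - 1)) / (2 * G_g\<^sup>2))
            + 2 * R * G_g / ((1 - sqrt (1 - \<sigma>\<^sup>2 / G_g\<^sup>2)) * sqrt T))"
proof -
  have "eta > 0" using eta_def R_pos Gf_pos T_pos by simp
  interpret ogd_polyak_run g f gradf x s T R G_f G_g \<sigma> \<epsilon> eta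
    using assms \<open>eta > 0\<close> x_step[unfolded rho_def] by unfold_locales
  have "sqrt T > 0" using T_pos by simp
  have "(2 * R)\<^sup>2 / (2 * eta) + T * (eta * G_f\<^sup>2 / 2) = R * G_f * (sqrt T + T / sqrt T)"
    using \<open>sqrt T > 0\<close> R_pos Gf_pos by (simp add: eta_def field_simps power2_eq_square)
  also have "T / sqrt T = sqrt T" by (simp add: real_div_sqrt)
  finally have regret_eq: "(2 * R)\<^sup>2 / (2 * eta) + T * (eta * G_f\<^sup>2 / 2) = 2 * R * G_f * sqrt T"
    by simp
  have constraint_le:  "G_g * (contraction_factor ^ (t - 1) * (2 * R) + eta * G_f / (1 - contraction_factor))
      \<le> 2 * R * G_g * exp (- (\<sigma>\<^sup>2 * (real t - 1)) / (2 * G_g\<^sup>2))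
        + 2 * R * G_g / ((1 - contraction_factor) * sqrt T)" if "t \<in> {1..T}" for t
  proof -
    have "\<sigma>\<^sup>2 / G_g\<^sup>2 \<le> 1" using contraction_factor_bounds(1) by simp
    from sqrt_one_minus_power_le_exp[OF this, of "t - 1"]
    have "contraction_factor ^ (t - 1) \<le> exp (- (\<sigma>\<^sup>2 * (real t - 1)) / (2 * G_g\<^sup>2))"
      using that by (simp add: of_nat_diff mult.commute)
    moreover have "eta * G_f = 2 * R / sqrt T" using Gf_pos by (simp add: eta_def)
    ultimately show ?thesis using R_pos Gg_pos by (simp add: algebra_simps mult_left_mono)
  qed
  show ?thesis
    using regret_bound regret_eq order_trans[OF constraint_bound constraint_le] by simp
qed

end
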